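(* Let $(V,\rho)$ be an $n$-dimensional irreducible reflection representation of $(W,S)$, $S=\{s_1,\dots,s_k\}$, over a field $\mathbb{F}$ of characteristic $0$, with chosen reflection vectors $\alpha_1,\dots,\alpha_k$, and suppose $I=[n]\subseteq[k]$ is such that $G_I$ is weakly connected and $\{\alpha_1,\dots,\alpha_n\}$ is a basis of $V$. Let $0\le d\le n$ and let $\varphi$ be a $W$-module endomorphism of $\bigwedge^dV$. Then for each $d$-element subset $J=\{i_1,\dots,i_d\}\subseteq I$ there is a scalar $\gamma_J\in\mathbb{F}$ with $\varphi(\alpha_{i_1}\wedge\cdots\wedge\alpha_{i_d})=\gamma_J\,\alpha_{i_1}\wedge\cdots\wedge\alpha_{i_d}$; and if $J'\subseteq I$ is obtained from $J$ by a move in $G_I$, then $\gamma_J=\gamma_{J'}$.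
   Context: A linear map $s:V\to V$ is a (generalized) reflection if it is diagonalizable and $\operatorname{rank}(s-\operatorname{Id}_V)=1$; a reflection vector of $s$ is a nonzero vector in $\operatorname{Im}(s-\operatorname{Id}_V)$. A reflection representation of $(W,S)$ is a finite-dimensional representation with each $\rho(s_i)$ a reflection; $\alpha_i$ is a chosen reflection vector of $s_i$. $W$ acts diagonally on $\bigwedge^dV$. For $I\subseteq[k]$, the digraph $G_I$ has vertex set $I$ and an arrow $i\to j$ ($i\neq j$) iff $s_j\cdot\alpha_i\neq\alpha_i$; weakly connected means connected after forgetting directions. For subsets $J,J'$ of the vertex set, $J'$ is obtained from $J$ by a move if there exist $i\in J$, $j\in J'$ such that $J\setminus\{i\}=J'\setminus\{j\}$ and either $i\to j$ or $j\to i$ is an arrow. *)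

theory Defs
  imports "Jordan_Normal_Form.DL_Rank" "Jordan_Normal_Form.DL_Submatrix"
begin

text \<open>Vectors of V are modelled as elements of carrier_vec n; linear maps V to V as n x n matrices.\<close>

definition diagonalizable :: "'a::field mat \<Rightarrow> bool" where
  "diagonalizable A \<longleftrightarrow> (\<exists>D. diagonal_mat D \<and> similar_mat A D)"

definition is_reflection :: "nat \<Rightarrow> 'a::field mat \<Rightarrow> bool" where
  "is_reflection n A \<longleftrightarrow> A \<in> carrier_mat n n \<and> diagonalizable A
     \<and> vec_space.rank n (A - 1\<^sub>m n) = 1"

definition is_reflection_vector :: "nat \<Rightarrow> 'a::field mat \<Rightarrow> 'a vec \<Rightarrow> bool" where
  "is_reflection_vector n A a \<longleftrightarrow> a \<in> carrier_vec n \<and> a \<noteq> 0\<^sub>v n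
     \<and> (\<exists>v\<in>carrier_vec n. a = (A - 1\<^sub>m n) *\<^sub>v v)"

definition vec_basis :: "nat \<Rightarrow> 'a::field vec set \<Rightarrow> bool" where
  "vec_basis n B \<longleftrightarrow> vectorspace.basis class_ring (module_vec TYPE('a) n) B"

definition lin_subspace :: "nat \<Rightarrow> 'a::field vec set \<Rightarrow> bool" where
  "lin_subspace n U \<longleftrightarrow> U \<subseteq> carrier_vec n \<and> 0\<^sub>v n \<in> U
     \<and> (\<forall>u\<in>U. \<forall>v\<in>U. u + v \<in> U) \<and> (\<forall>c. \<forall>u\<in>U. c \<cdot>\<^sub>v u \<in> U)"

text \<open>Irreducibility of the representation generated by the matrices s 0, ..., s (k-1)
  (the image of W is generated by the images of the generators).\<close>
definition irreducible_rep :: "nat \<Rightarrow> nat \<Rightarrow> (nat \<Rightarrow> 'a::field mat) \<Rightarrow> bool" where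
  "irreducible_rep n k s \<longleftrightarrow> 0 < n \<and>
     (\<forall>U. lin_subspace n U \<and> (\<forall>i<k. \<forall>u\<in>U. s i *\<^sub>v u \<in> U)
          \<longrightarrow> U = {0\<^sub>v n} \<or> U = carrier_vec n)"

definition arrow :: "(nat \<Rightarrow> 'a::field mat) \<Rightarrow> (nat \<Rightarrow> 'a vec) \<Rightarrow> nat set \<Rightarrow> nat \<Rightarrow> nat \<Rightarrow> bool" where
  "arrow s \<alpha> I i j \<longleftrightarrow> i \<in> I \<and> j \<in> I \<and> i \<noteq> j \<and> s j *\<^sub>v \<alpha> i \<noteq> \<alpha> i"

definition weakly_connected :: "(nat \<Rightarrow> 'a::field mat) \<Rightarrow> (nat \<Rightarrow> 'a vec) \<Rightarrow> nat set \<Rightarrow> bool" where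
  "weakly_connected s \<alpha> I \<longleftrightarrow>
     (\<forall>i\<in>I. \<forall>j\<in>I. (\<lambda>x y. arrow s \<alpha> I x y \<or> arrow s \<alpha> I y x)\<^sup>*\<^sup>* i j)"

definition is_move :: "(nat \<Rightarrow> 'a::field mat) \<Rightarrow> (nat \<Rightarrow> 'a vec) \<Rightarrow> nat set \<Rightarrow> nat set \<Rightarrow> nat set \<Rightarrow> bool" where
  "is_move s \<alpha> I J J' \<longleftrightarrow> (\<exists>i\<in>J. \<exists>j\<in>J'. J - {i} = J' - {j}
      \<and> (arrow s \<alpha> I i j \<or> arrow s \<alpha> I j i))"

text \<open>Exterior power in coordinates: an element of the d-th exterior power of F^n is given by
  its coordinates f K with respect to the standard basis e_K = e_{k1} wedge ... wedge e_{kd}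
  (k1 < ... < kd), indexed by the d-element subsets K of {0..<n}.\<close>
definition ext_pow :: "nat \<Rightarrow> nat \<Rightarrow> (nat set \<Rightarrow> 'a::field) set" where
  "ext_pow n d = {f. \<forall>K. f K \<noteq> 0 \<longrightarrow> K \<subseteq> {..<n} \<and> card K = d}"

text \<open>Coordinates of v_1 wedge ... wedge v_d: the maximal minors (Pluecker coordinates).\<close>
definition wedge :: "nat \<Rightarrow> 'a::field vec list \<Rightarrow> nat set \<Rightarrow> 'a" where
  "wedge n vs K = (if K \<subseteq> {..<n} \<and> card K = length vs
      then det (submatrix (mat_of_cols n vs) K UNIV) else 0)"

text \<open>Diagonal action of a linear map g on the d-th exterior power:
  g (e_K) = g e_{k1} wedge ... wedge g e_{kd}, extended linearly.\<close>
definition ext_act :: "nat \<Rightarrow> nat \<Rightarrow> 'a::field mat \<Rightarrow> (nat set \<Rightarrow> 'a) \<Rightarrow> (nat set \<Rightarrow> 'a)" where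
  "ext_act n d g f = (\<lambda>L. \<Sum>K\<in>{K. K \<subseteq> {..<n} \<and> card K = d}.
      f K * wedge n (map (col g) (sorted_list_of_set K)) L)"

text \<open>W-module endomorphism of the d-th exterior power (commuting with the generators suffices,
  since the image of W is generated by the images of the generators).\<close>
definition ext_endo :: "nat \<Rightarrow> nat \<Rightarrow> nat \<Rightarrow> (nat \<Rightarrow> 'a::field mat)
    \<Rightarrow> ((nat set \<Rightarrow> 'a) \<Rightarrow> (nat set \<Rightarrow> 'a)) \<Rightarrow> bool" where
  "ext_endo n d k s \<phi> \<longleftrightarrow>
     (\<forall>f\<in>ext_pow n d. \<phi> f \<in> ext_pow n d)
   \<and> (\<forall>f\<in>ext_pow n d. \<forall>g\<in>ext_pow n d. \<phi> (\<lambda>K. f K + g K) = (\<lambda>K. \<phi> f K + \<phi> g K))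
   \<and> (\<forall>c. \<forall>f\<in>ext_pow n d. \<phi> (\<lambda>K. c * f K) = (\<lambda>K. c * \<phi> f K))
   \<and> (\<forall>i<k. \<forall>f\<in>ext_pow n d. \<phi> (ext_act n d (s i) f) = ext_act n d (s i) (\<phi> f))"

end

theory Submission
  imports Defs "Jordan_Normal_Form.DL_Rank_Submatrix"
begin

text \<open>
  Let A be the matrix whose columns are the reflection vectors \<alpha>_1, ..., \<alpha>_n, and pass to
  \<alpha>-coordinates: \<psi> = A^-1 \<circ> \<phi> \<circ> A on the exterior power and t_i = A^-1 s_i A.  A
  diagonalizable s with rank (s - 1) = 1 has the form v \<mapsto> v + w(v) a with w(a) \<noteq> 0, since
  otherwise (s - 1)^2 = 0 would force s = 1.  Hence t_i agrees with the identity outside row i,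
  its diagonal entry t_i(i,i) = 1 + w_i(\<alpha>_i) is not 1, and t_i(i,j) = 0 exactly when s_i fixes
  \<alpha>_j.  By Cauchy-Binet, t_i acts on the exterior power through its d \<times> d minors, so e_J is an
  eigenvector for t_i(i,i) when i \<in> J, while the e_L-coordinate is unchanged when i \<notin> L.  As
  \<psi> commutes with every t_i, the coordinates of \<psi>(e_J) outside J vanish: \<psi>(e_J) = \<gamma>_J e_J.
  If s_q moves \<alpha>_p, where p \<in> X and q \<notin> X, then t_q(e_X) has a nonzero coordinate at
  Y = X - {p} \<union> {q}, and comparing this coordinate in \<psi>(t_q e_X) = t_q(\<psi> e_X) gives
  \<gamma>_X = \<gamma>_Y.  Irreducibility, connectedness of G_I and characteristic 0 are not used.
\<close>

section \<open>Subsets of a given size and their enumeration\<close>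

definition subsets_of_size :: "nat \<Rightarrow> nat \<Rightarrow> nat set set" where
  "subsets_of_size n d = {K. K \<subseteq> {..<n} \<and> card K = d}"

lemma subsets_of_size_iff: "K \<in> subsets_of_size n d \<longleftrightarrow> K \<subseteq> {..<n} \<and> card K = d"
  by (simp add: subsets_of_size_def)

lemma finite_subsets_of_size [simp]: "finite (subsets_of_size n d)"
  unfolding subsets_of_size_def by (rule finite_subset[of _ "Pow {..<n}"]) auto

lemma finite_of_subsets_of_size: "K \<in> subsets_of_size n d \<Longrightarrow> finite K"
  unfolding subsets_of_size_def using finite_subset by blast

lemma subsets_of_size_ne_obtain:
  assumes "L \<in> subsets_of_size n d" "K \<in> subsets_of_size n d" "L \<noteq> K"
  obtains l where "l \<in> L" "l \<notin> K"
proof -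
  have "\<not> L \<subseteq> K"
  proof
    assume "L \<subseteq> K"
    then have "L = K" using assms finite_of_subsets_of_size[OF assms(2)]
      by (intro card_subset_eq) (auto simp: subsets_of_size_iff)
    with assms(3) show False by simp
  qed
  then show ?thesis using that by blast
qed

lemma insert_Diff_in_subsets_of_size:
  assumes X: "X \<in> subsets_of_size n d" and x: "x \<in> X" and r: "r < n" "r \<notin> X"
  shows "insert r (X - {x}) \<in> subsets_of_size n d"
proof -
  have fin: "finite X" by (rule finite_of_subsets_of_size[OF X])
  then have "card (insert r (X - {x})) = Suc (card (X - {x}))" using r by simp
  also have "\<dots> = card X" using card_Suc_Diff1[OF fin x] .
  finally have "card (insert r (X - {x})) = card X" .
  then show ?thesis using X x r by (auto simp: subsets_of_size_iff)
qed

definition pick_index :: "nat set \<Rightarrow> nat \<Rightarrow> nat" where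
  "pick_index K x = card {y\<in>K. y < x}"

lemma pick_pick_index: "x \<in> K \<Longrightarrow> pick K (pick_index K x) = x"
  unfolding pick_index_def by (rule pick_card_in_set)

lemma pick_index_pick: "a < card K \<Longrightarrow> pick_index K (pick K a) = a"
  unfolding pick_index_def by (rule card_pick) simp

lemma pick_index_less_card:
  assumes "finite K" "x \<in> K" shows "pick_index K x < card K"
proof -
  have "{y\<in>K. y < x} \<subset> K" using assms by auto
  then show ?thesis unfolding pick_index_def using assms by (simp add: psubset_card_mono)
qed

lemma pick_in_set_less: "a < card K \<Longrightarrow> pick K a \<in> K"
  by (rule pick_in_set) simp

lemma pick_eq_iff: "a < card K \<Longrightarrow> b < card K \<Longrightarrow> pick K a = pick K b \<longleftrightarrow> a = b"
  by (metis pick_index_pick)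

lemma pick_in_subset_of_size:
  assumes "K \<in> subsets_of_size n d" "a < d" shows "pick K a \<in> K" "pick K a < n"
  using assms pick_in_set_less[of a K] by (auto simp: subsets_of_size_iff)

lemma bij_betw_pick: "finite K \<Longrightarrow> bij_betw (pick K) {0..<card K} K"
  by (rule bij_betwI[where g = "pick_index K"])
    (auto simp: pick_in_set_less pick_index_less_card pick_index_pick pick_pick_index)

lemma bij_betw_pick_index: "finite K \<Longrightarrow> bij_betw (pick_index K) K {0..<card K}"
  by (rule bij_betwI[where g = "pick K"])
    (auto simp: pick_in_set_less pick_index_less_card pick_index_pick pick_pick_index)

lemma sorted_list_of_set_eq_map_pick:
  assumes "finite K" shows "sorted_list_of_set K = map (pick K) [0..<card K]"
proof (rule strict_sorted_equal)
  show "sorted_wrt (<) (map (pick K) [0..<card K])"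
    by (auto simp: sorted_wrt_iff_nth_less intro!: pick_mono)
  show "set (sorted_list_of_set K) = set (map (pick K) [0..<card K])"
    using bij_betw_imp_surj_on[OF bij_betw_pick[OF assms]] assms by simp
qed simp

lemma pick_doubleton:
  assumes "x < y" shows "pick {x, y} 0 = x" "pick {x, y} (Suc 0) = y"
proof -
  have "{z \<in> {x, y}. z < x} = {}" "{z \<in> {x, y}. z < y} = {x}" using assms by auto
  then have "pick_index {x, y} x = 0" "pick_index {x, y} y = 1" unfolding pick_index_def by simp_all
  then show "pick {x, y} 0 = x" "pick {x, y} (Suc 0) = y"
    using pick_pick_index[of x "{x, y}"] pick_pick_index[of y "{x, y}"] by simp_all
qed

section \<open>Minors and the Cauchy-Binet formula\<close>

lemma submatrix_eq_mat:
  assumes "G \<in> carrier_mat m n" "L \<subseteq> {..<m}" "K \<subseteq> {..<n}"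
  shows "submatrix G L K = mat (card L) (card K) (\<lambda>(a, b). G $$ (pick L a, pick K b))"
proof -
  have "{i. i < m \<and> i \<in> L} = L" "{j. j < n \<and> j \<in> K} = K" using assms(2,3) by auto
  then show ?thesis using assms(1) unfolding submatrix_def by simp
qed

lemma submatrix_rows_eq_mat:
  assumes "G \<in> carrier_mat m n" "L \<subseteq> {..<m}"
  shows "submatrix G L UNIV = mat (card L) n (\<lambda>(a, j). G $$ (pick L a, j))"
proof -
  have "{i. i < m \<and> i \<in> L} = L" using assms(2) by auto
  then show ?thesis using assms(1) unfolding submatrix_def by (simp add: pick_UNIV)
qed

lemma submatrix_cols_eq_mat:
  assumes "G \<in> carrier_mat m n" "K \<subseteq> {..<n}"
  shows "submatrix G UNIV K = mat m (card K) (\<lambda>(i, b). G $$ (i, pick K b))"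
proof -
  have "{j. j < n \<and> j \<in> K} = K" using assms(2) by auto
  then show ?thesis using assms(1) unfolding submatrix_def by (simp add: pick_UNIV)
qed

lemma det_zero_row:
  assumes A: "A \<in> carrier_mat d d" and a: "a < d" and zero: "\<And>b. b < d \<Longrightarrow> A $$ (a, b) = 0"
  shows "det A = 0"
  using laplace_expansion_row[OF A a] zero by simp

lemma det_submatrix_zero_row:
  assumes G: "G \<in> carrier_mat n m" and L: "L \<subseteq> {..<n}" and K: "K \<subseteq> {..<m}" "card K = card L"
    and l: "l \<in> L" and zero: "\<And>k. k \<in> K \<Longrightarrow> G $$ (l, k) = 0"
  shows "det (submatrix G L K) = 0"
proof -
  have fin: "finite L" using L finite_subset by blast
  show ?thesis
  proof (rule det_zero_row)
    show "submatrix G L K \<in> carrier_mat (card L) (card L)" using submatrix_eq_mat[OF G L K(1)] K(2) by simp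
    show "pick_index L l < card L" using pick_index_less_card[OF fin l] .
    fix b assume "b < card L"
    then show "submatrix G L K $$ (pick_index L l, b) = 0"
      using pick_index_less_card[OF fin l] pick_pick_index[OF l] pick_in_set_less[of b K] K zero
      by (simp add: submatrix_eq_mat[OF G L K(1)])
  qed
qed

lemma det_submatrix_one:
  assumes L: "L \<in> subsets_of_size n d" and K: "K \<in> subsets_of_size n d"
  shows "det (submatrix (1\<^sub>m n :: 'a::field mat) L K) = (if L = K then 1 else 0)"
proof -
  have L': "L \<subseteq> {..<n}" "card L = d" and K': "K \<subseteq> {..<n}" "card K = d"
    using L K by (auto simp: subsets_of_size_iff)
  have one: "(1\<^sub>m n :: 'a mat) \<in> carrier_mat n n" by simp
  show ?thesis
  proof (cases "L = K")
    case True
    have "pick K a < n" if "a < d" for a using that K' pick_in_set_less[of a K] by auto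
    then have "submatrix (1\<^sub>m n :: 'a mat) K K = 1\<^sub>m d"
      using K' pick_eq_iff[of _ K] by (auto simp: submatrix_eq_mat[OF one K'(1) K'(1)] intro!: eq_matI)
    then show ?thesis using True by simp
  next
    case False
    then obtain l where "l \<in> L" "l \<notin> K" using subsets_of_size_ne_obtain[OF L K] by blast
    then have "det (submatrix (1\<^sub>m n :: 'a mat) L K) = 0"
      using L' K' by (intro det_submatrix_zero_row[OF one]) (auto simp: subset_iff)
    then show ?thesis using False by simp
  qed
qed

lemma permutes_eq_if_eq_but_one:
  assumes p: "p permutes S" and q: "q permutes S"
    and agree: "\<And>x. x \<in> S \<Longrightarrow> x \<noteq> r \<Longrightarrow> p x = q x"
  shows "p = q"
proof
  fix x
  show "p x = q x"
  proof (cases "x \<in> S \<and> x = r")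
    case True
    then have "x \<in> S" by blast
    then have "p x \<in> q ` S" unfolding permutes_image[OF q] by (simp add: permutes_in_image[OF p])
    then obtain a where a: "a \<in> S" "q a = p x" by auto
    have "a = x"
    proof (rule ccontr)
      assume "a \<noteq> x"
      then have "p a = q a" using True a(1) agree by blast
      then have "p a = p x" using a(2) by simp
      then show False using \<open>a \<noteq> x\<close> permutes_inj[OF p] by (simp add: inj_eq)
    qed
    then show ?thesis using a by simp
  next
    case False
    then show ?thesis using agree permutes_not_in[OF p] permutes_not_in[OF q] by (cases "x \<in> S") auto
  qed
qed

lemma det_perm_but_row:
  assumes A: "A \<in> carrier_mat d d" and \<sigma>: "\<sigma> permutes {0..<d}" and r: "r < d"
    and off: "\<And>a b. a < d \<Longrightarrow> b < d \<Longrightarrow> a \<noteq> r \<Longrightarrow> b \<noteq> \<sigma> a \<Longrightarrow> A $$ (a, b) = 0"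
    and on: "\<And>a. a < d \<Longrightarrow> a \<noteq> r \<Longrightarrow> A $$ (a, \<sigma> a) = 1"
  shows "det A = of_int (sign \<sigma>) * A $$ (r, \<sigma> r)"
proof -
  let ?term = "\<lambda>p. of_int (sign p) * (\<Prod>i = 0..<d. A $$ (i, p i))"
  let ?P = "{p. p permutes {0..<d}}"
  have "det A = sum ?term ?P" by (rule det_def'[OF A])
  also have "\<dots> = ?term \<sigma> + sum ?term (?P - {\<sigma>})"
    using \<sigma> by (intro sum.remove) (auto simp: finite_permutations)
  also have "sum ?term (?P - {\<sigma>}) = 0"
  proof (rule sum.neutral, rule ballI)
    fix p assume "p \<in> ?P - {\<sigma>}"
    then have p: "p permutes {0..<d}" and "p \<noteq> \<sigma>" by auto
    then obtain a where a: "a \<in> {0..<d}" "a \<noteq> r" "p a \<noteq> \<sigma> a"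
      using permutes_eq_if_eq_but_one[OF p \<sigma>, of r] by blast
    have "p a < d" using permutes_in_image[OF p] a by simp
    then have "(\<Prod>i = 0..<d. A $$ (i, p i)) = 0"
      using a off by (intro prod_zero) (auto intro!: bexI[of _ a])
    then show "?term p = 0" by simp
  qed
  also have "(\<Prod>i = 0..<d. A $$ (i, \<sigma> i)) = A $$ (r, \<sigma> r) * (\<Prod>i\<in>{0..<d} - {r}. A $$ (i, \<sigma> i))"
    using r by (intro prod.remove) auto
  also have "(\<Prod>i\<in>{0..<d} - {r}. A $$ (i, \<sigma> i)) = 1"
    using on by (intro prod.neutral) auto
  finally show ?thesis by simp
qed

lemma det_mult_sum_row_choices:
  fixes P Q :: "'a::comm_ring_1 mat"
  assumes P: "P \<in> carrier_mat d n" and Q: "Q \<in> carrier_mat n d"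
  shows "det (P * Q) = (\<Sum>f\<in>PiE {0..<d} (\<lambda>_. {0..<n}).
           (\<Prod>i = 0..<d. P $$ (i, f i)) * det (mat d d (\<lambda>(i, j). Q $$ (f i, j))))"
proof -
  let ?S = "{\<sigma>. \<sigma> permutes {0..<d}}" and ?F = "PiE {0..<d} (\<lambda>_. {0..<n})"
  have det_rows: "det (mat d d (\<lambda>(i, j). Q $$ (f i, j)))
      = (\<Sum>\<sigma>\<in>?S. of_int (sign \<sigma>) * (\<Prod>i = 0..<d. Q $$ (f i, \<sigma> i)))" for f
    by (subst det_def'[of _ d]) (auto intro!: sum.cong prod.cong dest: permutes_in_image)
  have "det (P * Q) = (\<Sum>\<sigma>\<in>?S. of_int (sign \<sigma>) * (\<Prod>i = 0..<d. (P * Q) $$ (i, \<sigma> i)))"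
    using P Q by (intro det_def') simp
  also have "\<dots> = (\<Sum>\<sigma>\<in>?S. of_int (sign \<sigma>) *
      (\<Sum>f\<in>?F. \<Prod>i = 0..<d. P $$ (i, f i) * Q $$ (f i, \<sigma> i)))"
  proof (intro sum.cong refl arg_cong[where f = "\<lambda>x. _ * x"])
    fix \<sigma> assume "\<sigma> \<in> ?S"
    then have "\<sigma> i < d" if "i < d" for i using permutes_in_image that by fastforce
    then have "(\<Prod>i = 0..<d. (P * Q) $$ (i, \<sigma> i))
        = (\<Prod>i = 0..<d. \<Sum>k\<in>{0..<n}. P $$ (i, k) * Q $$ (k, \<sigma> i))"
      using P Q by (intro prod.cong) (auto simp: scalar_prod_def)
    also have "\<dots> = (\<Sum>f\<in>?F. \<Prod>i = 0..<d. P $$ (i, f i) * Q $$ (f i, \<sigma> i))"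
      by (rule prod_sum_PiE) auto
    finally show "(\<Prod>i = 0..<d. (P * Q) $$ (i, \<sigma> i))
        = (\<Sum>f\<in>?F. \<Prod>i = 0..<d. P $$ (i, f i) * Q $$ (f i, \<sigma> i))" .
  qed
  also have "\<dots> = (\<Sum>f\<in>?F. \<Sum>\<sigma>\<in>?S. (\<Prod>i = 0..<d. P $$ (i, f i)) *
      (of_int (sign \<sigma>) * (\<Prod>i = 0..<d. Q $$ (f i, \<sigma> i))))"
    by (subst sum.swap) (simp add: sum_distrib_left prod.distrib ac_simps)
  also have "\<dots> = (\<Sum>f\<in>?F. (\<Prod>i = 0..<d. P $$ (i, f i)) * det (mat d d (\<lambda>(i, j). Q $$ (f i, j))))"
    by (simp add: det_rows sum_distrib_left)
  finally show ?thesis .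
qed

lemma restrict_pick_permutes_onto:
  assumes K: "K \<subseteq> {..<n}" "card K = d" and \<tau>: "\<tau> permutes {0..<d}"
  shows "restrict (pick K \<circ> \<tau>) {0..<d}
    \<in> {f \<in> PiE {0..<d} (\<lambda>_. {0..<n}). inj_on f {0..<d} \<and> f ` {0..<d} = K}"
proof -
  have "finite K" using K finite_subset by blast
  then have "bij_betw (pick K) {0..<d} K" using bij_betw_pick K(2) by blast
  then have bij: "bij_betw (pick K \<circ> \<tau>) {0..<d} K" by (rule bij_betw_trans[OF permutes_imp_bij[OF \<tau>]])
  then have bij': "bij_betw (restrict (pick K \<circ> \<tau>) {0..<d}) {0..<d} K"
    by (rule bij_betw_cong[THEN iffD1, rotated]) simp
  have "pick K \<circ> \<tau> \<in> {0..<d} \<rightarrow> {0..<n}"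
  proof
    fix i assume "i \<in> {0..<d}"
    then have "(pick K \<circ> \<tau>) i \<in> K" by (rule bij_betw_apply[OF bij])
    then show "(pick K \<circ> \<tau>) i \<in> {0..<n}" using K(1) by auto
  qed
  then have "restrict (pick K \<circ> \<tau>) {0..<d} \<in> PiE {0..<d} (\<lambda>_. {0..<n})" by simp
  then show ?thesis
    by (intro CollectI conjI bij_betw_imp_inj_on[OF bij'] bij_betw_imp_surj_on[OF bij'])
qed

lemma pick_index_comp_permutes:
  assumes K: "finite K" "card K = d" and f: "bij_betw f {0..<d} K"
  shows "(\<lambda>i. if i < d then pick_index K (f i) else i) permutes {0..<d}"
proof -
  have "bij_betw (pick_index K \<circ> f) {0..<d} {0..<d}"
    using bij_betw_trans[OF f bij_betw_pick_index[OF K(1)]] K(2) by simp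
  then have "bij_betw (\<lambda>i. if i < d then pick_index K (f i) else i) {0..<d} {0..<d}"
    by (rule bij_betw_cong[THEN iffD1, rotated]) simp
  then show ?thesis by (rule bij_imp_permutes) simp
qed

lemma bij_betw_permutes_onto_subset:
  assumes K: "K \<subseteq> {..<n}" "card K = d"
  shows "bij_betw (\<lambda>\<tau>. restrict (pick K \<circ> \<tau>) {0..<d}) {\<tau>. \<tau> permutes {0..<d}}
           {f \<in> PiE {0..<d} (\<lambda>_. {0..<n}). inj_on f {0..<d} \<and> f ` {0..<d} = K}"
proof (rule bij_betwI[where g = "\<lambda>f i. if i < d then pick_index K (f i) else i"])
  have fin: "finite K" using K finite_subset by blast
  show "(\<lambda>\<tau>. restrict (pick K \<circ> \<tau>) {0..<d}) \<in> {\<tau>. \<tau> permutes {0..<d}}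
      \<rightarrow> {f \<in> PiE {0..<d} (\<lambda>_. {0..<n}). inj_on f {0..<d} \<and> f ` {0..<d} = K}"
    using restrict_pick_permutes_onto[OF K] by blast
  show "(\<lambda>f i. if i < d then pick_index K (f i) else i)
      \<in> {f \<in> PiE {0..<d} (\<lambda>_. {0..<n}). inj_on f {0..<d} \<and> f ` {0..<d} = K} \<rightarrow> {\<tau>. \<tau> permutes {0..<d}}"
    using pick_index_comp_permutes[OF fin K(2)] by (auto simp: bij_betw_def)
  show "(\<lambda>i. if i < d then pick_index K (restrict (pick K \<circ> \<tau>) {0..<d} i) else i) = \<tau>"
    if "\<tau> \<in> {\<tau>. \<tau> permutes {0..<d}}" for \<tau>
  proof
    fix i
    have \<tau>: "\<tau> permutes {0..<d}" using that by simp
    show "(if i < d then pick_index K (restrict (pick K \<circ> \<tau>) {0..<d} i) else i) = \<tau> i"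
      using permutes_in_image[OF \<tau>, of i] permutes_not_in[OF \<tau>, of i] K(2)
      by (cases "i < d") (simp_all add: pick_index_pick)
  qed
  show "restrict (pick K \<circ> (\<lambda>i. if i < d then pick_index K (f i) else i)) {0..<d} = f"
    if f: "f \<in> {f \<in> PiE {0..<d} (\<lambda>_. {0..<n}). inj_on f {0..<d} \<and> f ` {0..<d} = K}" for f
  proof
    fix i
    note fP = f[unfolded mem_Collect_eq, THEN conjunct1]
      and img = f[unfolded mem_Collect_eq, THEN conjunct2, THEN conjunct2]
    show "restrict (pick K \<circ> (\<lambda>i. if i < d then pick_index K (f i) else i)) {0..<d} i = f i"
    proof (cases "i < d")
      case True
      then have "f i \<in> K" unfolding img[symmetric] by simp
      then show ?thesis using True by (simp add: pick_pick_index)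
    qed (simp add: PiE_arb[OF fP])
  qed
qed

lemma sum_row_choices_onto_subset:
  fixes P Q :: "'a::comm_ring_1 mat"
  assumes P: "P \<in> carrier_mat d n" and Q: "Q \<in> carrier_mat n d" and K: "K \<subseteq> {..<n}" "card K = d"
  shows "(\<Sum>f\<in>{f \<in> PiE {0..<d} (\<lambda>_. {0..<n}). inj_on f {0..<d} \<and> f ` {0..<d} = K}.
      (\<Prod>i = 0..<d. P $$ (i, f i)) * det (mat d d (\<lambda>(i, j). Q $$ (f i, j))))
    = det (submatrix P UNIV K) * det (submatrix Q K UNIV)"
proof -
  have PK: "submatrix P UNIV K = mat d d (\<lambda>(i, b). P $$ (i, pick K b))"
    using submatrix_cols_eq_mat[OF P K(1)] K by simp
  have QK: "submatrix Q K UNIV = mat d d (\<lambda>(a, j). Q $$ (pick K a, j))"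
    using submatrix_rows_eq_mat[OF Q K(1)] K by simp
  then have QKc: "submatrix Q K UNIV \<in> carrier_mat d d" by simp
  have summand: "(\<Prod>i = 0..<d. P $$ (i, restrict (pick K \<circ> \<tau>) {0..<d} i))
        * det (mat d d (\<lambda>(i, j). Q $$ (restrict (pick K \<circ> \<tau>) {0..<d} i, j)))
      = det (submatrix Q K UNIV) * (of_int (sign \<tau>) * (\<Prod>i = 0..<d. submatrix P UNIV K $$ (i, \<tau> i)))"
    if \<tau>: "\<tau> permutes {0..<d}" for \<tau>
  proof -
    have \<tau>d: "\<tau> i < d" if "i < d" for i using permutes_in_image[OF \<tau>] that by simp
    have "mat d d (\<lambda>(i, j). Q $$ (restrict (pick K \<circ> \<tau>) {0..<d} i, j))
        = mat d d (\<lambda>(i, j). submatrix Q K UNIV $$ (\<tau> i, j))"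
      using \<tau>d by (auto simp: QK)
    then have "det (mat d d (\<lambda>(i, j). Q $$ (restrict (pick K \<circ> \<tau>) {0..<d} i, j)))
        = of_int (sign \<tau>) * det (submatrix Q K UNIV)"
      using det_permute_rows[OF QKc \<tau>] by simp
    moreover have "(\<Prod>i = 0..<d. P $$ (i, restrict (pick K \<circ> \<tau>) {0..<d} i))
        = (\<Prod>i = 0..<d. submatrix P UNIV K $$ (i, \<tau> i))"
      using \<tau>d by (intro prod.cong) (auto simp: PK)
    ultimately show ?thesis by (simp add: ac_simps)
  qed
  have "(\<Sum>f\<in>{f \<in> PiE {0..<d} (\<lambda>_. {0..<n}). inj_on f {0..<d} \<and> f ` {0..<d} = K}.
      (\<Prod>i = 0..<d. P $$ (i, f i)) * det (mat d d (\<lambda>(i, j). Q $$ (f i, j))))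
    = (\<Sum>\<tau> | \<tau> permutes {0..<d}. (\<Prod>i = 0..<d. P $$ (i, restrict (pick K \<circ> \<tau>) {0..<d} i))
        * det (mat d d (\<lambda>(i, j). Q $$ (restrict (pick K \<circ> \<tau>) {0..<d} i, j))))"
    by (rule sum.reindex_bij_betw[OF bij_betw_permutes_onto_subset[OF K], symmetric])
  also have "\<dots> = (\<Sum>\<tau> | \<tau> permutes {0..<d}.
      det (submatrix Q K UNIV) * (of_int (sign \<tau>) * (\<Prod>i = 0..<d. submatrix P UNIV K $$ (i, \<tau> i))))"
    by (rule sum.cong[OF refl], rule summand) simp
  also have "\<dots> = det (submatrix Q K UNIV) * det (submatrix P UNIV K)"
    by (simp add: det_def'[of _ d] PK sum_distrib_left)
  finally show ?thesis by (simp add: ac_simps)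
qed

theorem cauchy_binet:
  fixes P Q :: "'a::comm_ring_1 mat"
  assumes P: "P \<in> carrier_mat d n" and Q: "Q \<in> carrier_mat n d"
  shows "det (P * Q) = (\<Sum>K\<in>subsets_of_size n d. det (submatrix P UNIV K) * det (submatrix Q K UNIV))"
proof -
  let ?F = "PiE {0..<d} (\<lambda>_. {0..<n})"
  let ?Inj = "{f \<in> ?F. inj_on f {0..<d}}"
  define h where "h f = (\<Prod>i = 0..<d. P $$ (i, f i)) * det (mat d d (\<lambda>(i, j). Q $$ (f i, j)))" for f
  have "det (P * Q) = (\<Sum>f\<in>?F. h f)" unfolding h_def by (rule det_mult_sum_row_choices[OF P Q])
  also have "\<dots> = (\<Sum>f\<in>?Inj. h f)"
  proof (rule sum.mono_neutral_right)
    show "\<forall>f\<in>?F - ?Inj. h f = 0"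
    proof
      fix f assume "f \<in> ?F - ?Inj"
      then obtain i j where "i < d" "j < d" "i \<noteq> j" "f i = f j" by (auto simp: inj_on_def)
      then have "det (mat d d (\<lambda>(i, j). Q $$ (f i, j))) = 0"
        by (intro det_identical_rows[of _ d i j]) (auto intro!: eq_vecI)
      then show "h f = 0" by (simp add: h_def)
    qed
  qed (auto simp: finite_PiE)
  also have "\<dots> = (\<Sum>K\<in>subsets_of_size n d. \<Sum>f\<in>{f \<in> ?Inj. f ` {0..<d} = K}. h f)"
  proof (rule sum.group[symmetric])
    show "finite ?Inj" by (simp add: finite_PiE)
  qed (auto simp: subsets_of_size_iff card_image PiE_iff)
  also have "\<dots> = (\<Sum>K\<in>subsets_of_size n d. det (submatrix P UNIV K) * det (submatrix Q K UNIV))"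
  proof (rule sum.cong[OF refl])
    fix K assume "K \<in> subsets_of_size n d"
    then have K: "K \<subseteq> {..<n}" "card K = d" by (auto simp: subsets_of_size_iff)
    have "{f \<in> ?Inj. f ` {0..<d} = K} = {f \<in> ?F. inj_on f {0..<d} \<and> f ` {0..<d} = K}" by auto
    then show "(\<Sum>f\<in>{f \<in> ?Inj. f ` {0..<d} = K}. h f) = det (submatrix P UNIV K) * det (submatrix Q K UNIV)"
      using sum_row_choices_onto_subset[OF P Q K] by (simp add: h_def)
  qed
  finally show ?thesis .
qed

lemma det_submatrix_mult:
  fixes G H :: "'a::comm_ring_1 mat"
  assumes G: "G \<in> carrier_mat n n" and H: "H \<in> carrier_mat n n"
    and L: "L \<in> subsets_of_size n d" and M: "M \<in> subsets_of_size n d"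
  shows "det (submatrix (G * H) L M) = (\<Sum>K\<in>subsets_of_size n d. det (submatrix G L K) * det (submatrix H K M))"
proof -
  have L': "L \<subseteq> {..<n}" "card L = d" and M': "M \<subseteq> {..<n}" "card M = d"
    using L M by (auto simp: subsets_of_size_iff)
  let ?P = "submatrix G L UNIV" and ?Q = "submatrix H UNIV M"
  have P: "?P = mat d n (\<lambda>(a, j). G $$ (pick L a, j))" using submatrix_rows_eq_mat[OF G L'(1)] L' by simp
  have Q: "?Q = mat n d (\<lambda>(j, b). H $$ (j, pick M b))" using submatrix_cols_eq_mat[OF H M'(1)] M' by simp
  have pick: "pick L a < n" "pick M a < n" if "a < d" for a
    using that L' M' pick_in_set_less[of a L] pick_in_set_less[of a M] by auto
  have GH: "G * H \<in> carrier_mat n n" using G H by simp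
  have "submatrix (G * H) L M = ?P * ?Q"
    using G H L' pick by (auto simp: submatrix_eq_mat[OF GH L'(1) M'(1)] M'(2) P Q scalar_prod_def intro!: eq_matI)
  moreover have Pc: "?P \<in> carrier_mat d n" and Qc: "?Q \<in> carrier_mat n d" by (simp_all add: P Q)
  moreover have "submatrix ?P UNIV K = submatrix G L K" "submatrix ?Q K UNIV = submatrix H K M"
    if "K \<in> subsets_of_size n d" for K
  proof -
    have K: "K \<subseteq> {..<n}" "card K = d" using that by (auto simp: subsets_of_size_iff)
    have "pick K a < n" if "a < d" for a using that K pick_in_set_less[of a K] by auto
    then show "submatrix ?P UNIV K = submatrix G L K" "submatrix ?Q K UNIV = submatrix H K M"
      unfolding submatrix_cols_eq_mat[OF Pc K(1)] submatrix_rows_eq_mat[OF Qc K(1)]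
        submatrix_eq_mat[OF G L'(1) K(1)] submatrix_eq_mat[OF H K(1) M'(1)]
      using pick K L' M' by (auto simp: P Q intro!: eq_matI)
  qed
  ultimately show ?thesis by (simp add: cauchy_binet[OF Pc Qc])
qed

lemma det_2x2:
  fixes M :: "'a::comm_ring_1 mat"
  assumes M: "M \<in> carrier_mat 2 2"
  shows "det M = M $$ (0, 0) * M $$ (1, 1) - M $$ (0, 1) * M $$ (1, 0)"
proof -
  have del: "mat_delete M 0 j \<in> carrier_mat 1 1" for j using mat_delete_carrier[OF M] by simp
  have "det M = (\<Sum>j<2. M $$ (0, j) * cofactor M 0 j)" by (rule laplace_expansion_row[OF M]) simp
  also have "\<dots> = M $$ (0, 0) * cofactor M 0 0 + M $$ (0, 1) * cofactor M 0 1"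
    by (simp add: numeral_2_eq_2)
  also have "cofactor M 0 0 = M $$ (1, 1)"
    unfolding cofactor_def using det_single[OF del[of 0]] M by (simp add: mat_delete_def)
  also have "cofactor M 0 1 = - M $$ (1, 0)"
    unfolding cofactor_def using det_single[OF del[of 1]] M by (simp add: mat_delete_def)
  finally show ?thesis by (simp add: algebra_simps)
qed

lemma rank_le_one_2x2_minor_ordered:
  fixes N :: "'a::field mat"
  assumes N: "N \<in> carrier_mat n m" and rk: "vec_space.rank n N \<le> 1"
    and r: "r1 < r2" "r2 < n" and c: "c1 < c2" "c2 < m"
  shows "N $$ (r1, c1) * N $$ (r2, c2) = N $$ (r1, c2) * N $$ (r2, c1)"
proof (rule ccontr)
  assume ne: "\<not> ?thesis"
  let ?S = "submatrix N {r1, r2} {c1, c2}"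
  have sub: "{r1, r2} \<subseteq> {..<n}" "{c1, c2} \<subseteq> {..<m}" and card: "card {r1, r2} = 2" "card {c1, c2} = 2"
    using r c by auto
  have S: "?S = mat 2 2 (\<lambda>(a, b). N $$ (pick {r1, r2} a, pick {c1, c2} b))"
    using submatrix_eq_mat[OF N sub] card by simp
  have "det ?S = N $$ (r1, c1) * N $$ (r2, c2) - N $$ (r1, c2) * N $$ (r2, c1)"
    by (subst det_2x2) (simp_all add: S pick_doubleton r c del: pick.simps)
  with ne have "card {j. j < m \<and> j \<in> {c1, c2}} \<le> vec_space.rank n N"
    by (intro vec_space.rank_gt_minor[OF N, of "{r1, r2}"]) simp
  moreover have "{j. j < m \<and> j \<in> {c1, c2}} = {c1, c2}" using c by auto
  ultimately show False using rk card by simp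
qed

lemma rank_le_one_2x2_minor:
  fixes N :: "'a::field mat"
  assumes N: "N \<in> carrier_mat n m" and rk: "vec_space.rank n N \<le> 1"
    and r: "r1 < n" "r2 < n" and c: "c1 < m" "c2 < m"
  shows "N $$ (r1, c1) * N $$ (r2, c2) = N $$ (r1, c2) * N $$ (r2, c1)"
proof (cases r1 r2 rule: linorder_cases)
  case less
  then show ?thesis
    using rank_le_one_2x2_minor_ordered[OF N rk less r(2)] c
    by (cases c1 c2 rule: linorder_cases) (auto simp: ac_simps)
next
  case greater
  then show ?thesis
    using rank_le_one_2x2_minor_ordered[OF N rk greater r(1)] c
    by (cases c1 c2 rule: linorder_cases) (auto simp: ac_simps)
qed (simp add: ac_simps)

section \<open>Reflections in the basis of their reflection vectors\<close>

lemma rank_le_one_outer_product: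
  fixes N :: "'a::field mat"
  assumes N: "N \<in> carrier_mat n m" and rk: "vec_space.rank n N \<le> 1"
    and v0: "v0 \<in> carrier_vec m" and a: "a = N *\<^sub>v v0" "a \<noteq> 0\<^sub>v n"
  shows "\<exists>w\<in>carrier_vec m. \<forall>r<n. \<forall>c<m. N $$ (r, c) = a $ r * w $ c"
proof -
  have entry: "(N *\<^sub>v v) $ r = (\<Sum>c = 0..<m. N $$ (r, c) * v $ c)"
    if "v \<in> carrier_vec m" "r < n" for v r
    using N that by (simp add: scalar_prod_def)
  have "\<exists>r0<n. \<exists>c0<m. N $$ (r0, c0) \<noteq> 0"
  proof (rule ccontr)
    assume "\<not> ?thesis"
    then have "a = 0\<^sub>v n" using a(1) v0 N by (intro eq_vecI) (auto simp: scalar_prod_def)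
    with a(2) show False by simp
  qed
  then obtain r0 c0 where rc: "r0 < n" "c0 < m" "N $$ (r0, c0) \<noteq> 0" by blast
  define x where "x = vec n (\<lambda>r. N $$ (r, c0))"
  define u where "u = vec m (\<lambda>c. N $$ (r0, c) / N $$ (r0, c0))"
  have N_eq: "N $$ (r, c) = x $ r * u $ c" if "r < n" "c < m" for r c
    using rank_le_one_2x2_minor[OF N rk that(1) rc(1) that(2) rc(2)] rc that
    by (simp add: x_def u_def field_simps)
  have a_eq: "a $ r = x $ r * (u \<bullet> v0)" if "r < n" for r
    using that v0 by (simp add: a(1) entry N_eq scalar_prod_def sum_distrib_left ac_simps u_def)
  have "u \<bullet> v0 \<noteq> 0"
  proof
    assume "u \<bullet> v0 = 0"
    then have "a = 0\<^sub>v n" using a_eq a(1) N by (intro eq_vecI) auto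
    with a(2) show False by simp
  qed
  then have "N $$ (r, c) = a $ r * ((1 / (u \<bullet> v0)) \<cdot>\<^sub>v u) $ c" if "r < n" "c < m" for r c
    using that by (simp add: N_eq a_eq u_def)
  then show ?thesis by (intro bexI[of _ "(1 / (u \<bullet> v0)) \<cdot>\<^sub>v u"]) (auto simp: u_def)
qed

lemma diagonalizable_unipotent_eq_one:
  fixes A :: "'a::field mat"
  assumes A: "A \<in> carrier_mat n n" and dg: "diagonalizable A"
    and sq: "(A - 1\<^sub>m n) * (A - 1\<^sub>m n) = 0\<^sub>m n n"
  shows "A = 1\<^sub>m n"
proof -
  obtain D where D: "diagonal_mat D" "similar_mat A D" using dg unfolding diagonalizable_def by blast
  obtain m P Q where sim: "{A, D, P, Q} \<subseteq> carrier_mat m m" "P * Q = 1\<^sub>m m" "Q * P = 1\<^sub>m m"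
    and AD: "A = P * D * Q"
    using similar_matD[OF D(2)] by blast
  have "m = n" using sim(1) A by auto
  then have carr: "P \<in> carrier_mat n n" "Q \<in> carrier_mat n n" "D \<in> carrier_mat n n"
    and PQ: "P * Q = 1\<^sub>m n" "Q * P = 1\<^sub>m n"
    using sim by auto
  define N where "N = A - 1\<^sub>m n"
  define E where "E = D - 1\<^sub>m n"
  have N: "N \<in> carrier_mat n n" using A unfolding N_def carrier_mat_def by simp
  have E: "E \<in> carrier_mat n n" using carr unfolding E_def carrier_mat_def by simp
  have "Q * A * P = (Q * P) * D * (Q * P)"
    using carr by (simp add: AD assoc_mult_mat[of _ n n _ n _ n])
  then have QAP: "Q * A * P = D" using PQ carr by simp
  have "Q * N * P = Q * A * P - Q * P"
    using carr A unfolding N_def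
    by (simp add: mult_minus_distrib_mat[of Q n n] minus_mult_distrib_mat[of _ n n _ P n])
  then have QNP: "Q * N * P = E" using QAP PQ by (simp add: E_def)
  have "E * E = (Q * N * P) * (Q * N * P)" using QNP by simp
  also have "\<dots> = Q * N * (P * Q) * N * P" using carr N by (simp add: assoc_mult_mat[of _ n n _ n _ n])
  also have "\<dots> = Q * (N * N) * P" using carr N PQ by (simp add: assoc_mult_mat[of _ n n _ n _ n])
  finally have EE: "E * E = 0\<^sub>m n n" using sq carr by (simp add: N_def)
  have E_diag: "E $$ (i, j) = 0" if "i < n" "j < n" "i \<noteq> j" for i j
    using D(1) carr that unfolding diagonal_mat_def by (simp add: E_def)
  have "E $$ (j, j) = 0" if j: "j < n" for j
  proof -
    have "(E * E) $$ (j, j) = (\<Sum>k = 0..<n. E $$ (j, k) * E $$ (k, j))"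
      using E j by (simp add: scalar_prod_def)
    also have "\<dots> = E $$ (j, j) * E $$ (j, j)"
      using j E_diag by (subst sum.remove[of _ j]) (auto intro!: sum.neutral)
    finally show ?thesis using EE j by simp
  qed
  with E_diag have "D = 1\<^sub>m n" using carr by (intro eq_matI) (auto simp: E_def)
  then show ?thesis using AD PQ carr by simp
qed

lemma reflection_normal_form:
  fixes s :: "'a::field mat"
  assumes R: "is_reflection n s" and V: "is_reflection_vector n s a"
  shows "\<exists>w\<in>carrier_vec n. (\<forall>v\<in>carrier_vec n. s *\<^sub>v v = v + (w \<bullet> v) \<cdot>\<^sub>v a) \<and> w \<bullet> a \<noteq> 0"
proof -
  define N where "N = s - 1\<^sub>m n"
  from R have s: "s \<in> carrier_mat n n" and dg: "diagonalizable s" and rk: "vec_space.rank n N = 1"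
    unfolding is_reflection_def N_def by auto
  from V obtain v0 where a: "a \<in> carrier_vec n" "a \<noteq> 0\<^sub>v n" and v0: "v0 \<in> carrier_vec n" "a = N *\<^sub>v v0"
    unfolding is_reflection_vector_def N_def by auto
  have N: "N \<in> carrier_mat n n" using s unfolding N_def carrier_mat_def by simp
  obtain w where w: "w \<in> carrier_vec n" and N_eq: "\<And>r c. r < n \<Longrightarrow> c < n \<Longrightarrow> N $$ (r, c) = a $ r * w $ c"
    using rank_le_one_outer_product[OF N _ v0 a(2)] rk by auto
  have Nv: "N *\<^sub>v v = (w \<bullet> v) \<cdot>\<^sub>v a" if "v \<in> carrier_vec n" for v
    using that N a w by (intro eq_vecI) (auto simp: N_eq scalar_prod_def sum_distrib_left ac_simps)
  have "s = N + 1\<^sub>m n" using s unfolding N_def by (intro eq_matI) auto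
  then have sv: "s *\<^sub>v v = v + (w \<bullet> v) \<cdot>\<^sub>v a" if "v \<in> carrier_vec n" for v
    using that N a by (simp add: add_mult_distrib_mat_vec[of N n n] Nv comm_add_vec[of _ n])
  have "w \<bullet> a \<noteq> 0"
  proof
    assume wa: "w \<bullet> a = 0"
    have "N * N = 0\<^sub>m n n"
    proof (rule eq_matI)
      fix r c assume "r < dim_row (0\<^sub>m n n :: 'a mat)" "c < dim_col (0\<^sub>m n n :: 'a mat)"
      then have rc: "r < n" "c < n" by auto
      have "(N * N) $$ (r, c) = (\<Sum>k = 0..<n. (a $ r * w $ c) * (w $ k * a $ k))"
        using N rc by (auto simp: scalar_prod_def N_eq ac_simps intro!: sum.cong)
      also have "\<dots> = (a $ r * w $ c) * (w \<bullet> a)"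
        using w a by (simp add: scalar_prod_def sum_distrib_left)
      finally show "(N * N) $$ (r, c) = (0\<^sub>m n n :: 'a mat) $$ (r, c)" using wa rc by simp
    qed (use N in auto)
    then have "s = 1\<^sub>m n" using diagonalizable_unipotent_eq_one[OF s dg] by (simp add: N_def)
    then have "N = 0\<^sub>m n n" by (simp add: N_def)
    then have "a = 0\<^sub>v n" using v0 by (intro eq_vecI) auto
    with a(2) show False by simp
  qed
  with sv w show ?thesis by blast
qed

definition identity_off_row :: "nat \<Rightarrow> nat \<Rightarrow> 'a::zero_neq_one mat \<Rightarrow> bool" where
  "identity_off_row n r t \<longleftrightarrow> t \<in> carrier_mat n n \<and> r < n \<and>
     (\<forall>l<n. \<forall>m<n. l \<noteq> r \<longrightarrow> t $$ (l, m) = (if l = m then 1 else 0))"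

lemma identity_off_row_entry:
  "identity_off_row n r t \<Longrightarrow> l < n \<Longrightarrow> m < n \<Longrightarrow> l \<noteq> r \<Longrightarrow> t $$ (l, m) = (if l = m then 1 else 0)"
  unfolding identity_off_row_def by blast

lemma vec_basis_mat_of_cols_invertible:
  fixes \<alpha> :: "nat \<Rightarrow> 'a::field vec"
  assumes basis: "vec_basis n (\<alpha> ` {..<n})" and car: "\<And>i. i < n \<Longrightarrow> \<alpha> i \<in> carrier_vec n"
  obtains B where "B \<in> carrier_mat n n"
    "mat_of_cols n (map \<alpha> [0..<n]) * B = 1\<^sub>m n" "B * mat_of_cols n (map \<alpha> [0..<n]) = 1\<^sub>m n"
proof -
  let ?A = "mat_of_cols n (map \<alpha> [0..<n])" and ?S = "\<alpha> ` {..<n}"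
  have A: "?A \<in> carrier_mat n n" by (metis mat_of_cols_carrier(1) length_map length_upt diff_zero)
  have "set (map \<alpha> [0..<n]) \<subseteq> carrier_vec n" using car by auto
  then have cols: "set (cols ?A) = ?S" using cols_mat_of_cols by auto
  have vs: "vectorspace class_ring (module_vec TYPE('a) n)" by (rule vec_vs)
  have bas: "vectorspace.basis class_ring (module_vec TYPE('a) n) ?S" using basis unfolding vec_basis_def .
  then have li: "\<not> module.lin_dep class_ring (module_vec TYPE('a) n) ?S"
    using vectorspace.basis_def[OF vs] by blast
  have "vectorspace.dim class_ring (module_vec TYPE('a) n) = card ?S"
    by (rule vectorspace.dim_basis[OF vs _ bas]) simp
  then have "card ?S = n" using vec_space.dim_is_n by metis
  moreover have "maximal ?S (\<lambda>T. T \<subseteq> set (cols ?A) \<and> \<not> module.lin_dep class_ring (module_vec TYPE('a) n) T)"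
    unfolding maximal_def cols using li by auto
  ultimately have "vec_space.rank n ?A = n" using vec_space.rank_card_indpt[OF A] by simp
  then have "det ?A \<noteq> 0" using vec_space.det_rank_iff[OF A] by simp
  then have "?A \<in> Units (ring_mat TYPE('a) n undefined)" by (rule det_non_zero_imp_unit[OF A])
  then show ?thesis using that unfolding Units_def ring_mat_simps by auto
qed

lemma reflection_in_basis:
  fixes s A B :: "'a::field mat"
  assumes R: "is_reflection n s" and V: "is_reflection_vector n s (col A i)" and i: "i < n"
    and A: "A \<in> carrier_mat n n" and B: "B \<in> carrier_mat n n" and BA: "B * A = 1\<^sub>m n"
  shows "identity_off_row n i (B * s * A)" "(B * s * A) $$ (i, i) \<noteq> 1"
    and "\<And>j. j < n \<Longrightarrow> j \<noteq> i \<Longrightarrow> (B * s * A) $$ (i, j) = 0 \<longleftrightarrow> s *\<^sub>v col A j = col A j"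
proof -
  let ?a = "col A i"
  have s: "s \<in> carrier_mat n n" using R by (simp add: is_reflection_def)
  have a: "?a \<in> carrier_vec n" "?a \<noteq> 0\<^sub>v n" using V by (simp_all add: is_reflection_vector_def)
  obtain w where w: "w \<in> carrier_vec n" and sv: "\<And>v. v \<in> carrier_vec n \<Longrightarrow> s *\<^sub>v v = v + (w \<bullet> v) \<cdot>\<^sub>v ?a"
    and wa: "w \<bullet> ?a \<noteq> 0"
    using reflection_normal_form[OF R V] by blast
  have BsA: "B * s * A \<in> carrier_mat n n" using B s A by simp
  have Bcol: "B *\<^sub>v col A m = unit_vec n m" if "m < n" for m
    using col_mult2[OF B A that] BA col_one[OF that] by metis
  have entry: "(B * s * A) $$ (l, m) = (if l = m then 1 else 0) + (if l = i then w \<bullet> col A m else 0)"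
    if "l < n" "m < n" for l m
  proof -
    have "col (B * s * A) m = (B * s) *\<^sub>v col A m" using B s A that by (intro col_mult2) auto
    also have "\<dots> = B *\<^sub>v (s *\<^sub>v col A m)" using B s A that by (intro assoc_mult_mat_vec) auto
    also have "\<dots> = B *\<^sub>v col A m + (w \<bullet> col A m) \<cdot>\<^sub>v (B *\<^sub>v ?a)"
    proof -
      have cm: "col A m \<in> carrier_vec n" using A that by simp
      have "(w \<bullet> col A m) \<cdot>\<^sub>v ?a \<in> carrier_vec n" using a(1) by simp
      then show ?thesis by (simp only: sv[OF cm] mult_add_distrib_mat_vec[OF B cm] mult_mat_vec[OF B a(1)])
    qed
    also have "\<dots> = unit_vec n m + (w \<bullet> col A m) \<cdot>\<^sub>v unit_vec n i"
      by (simp only: Bcol[OF that(2)] Bcol[OF i])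
    finally have "col (B * s * A) m = unit_vec n m + (w \<bullet> col A m) \<cdot>\<^sub>v unit_vec n i" .
    moreover have "(B * s * A) $$ (l, m) = col (B * s * A) m $ l" using A B that by simp
    ultimately show ?thesis using that i by simp
  qed
  show "identity_off_row n i (B * s * A)" using BsA i by (simp add: identity_off_row_def entry)
  show "(B * s * A) $$ (i, i) \<noteq> 1" using wa i by (simp add: entry)
  fix j assume j: "j < n" "j \<noteq> i"
  have "s *\<^sub>v col A j = col A j \<longleftrightarrow> (\<forall>k<n. (w \<bullet> col A j) * ?a $ k = 0)"
    using A a j by (simp add: sv vec_eq_iff)
  also have "\<dots> \<longleftrightarrow> w \<bullet> col A j = 0"
    using a A by (auto simp: vec_eq_iff)
  finally show "(B * s * A) $$ (i, j) = 0 \<longleftrightarrow> s *\<^sub>v col A j = col A j" using i j by (simp add: entry)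
qed

lemma det_submatrix_identity_off_row_notin:
  fixes t :: "'a::field mat"
  assumes t: "identity_off_row n r t" and L: "L \<in> subsets_of_size n d" and K: "K \<in> subsets_of_size n d"
    and r: "r \<notin> L"
  shows "det (submatrix t L K) = (if L = K then 1 else 0)"
proof -
  have L': "L \<subseteq> {..<n}" "card L = d" and K': "K \<subseteq> {..<n}" "card K = d"
    using L K by (auto simp: subsets_of_size_iff)
  have tc: "t \<in> carrier_mat n n" using t by (simp add: identity_off_row_def)
  have "submatrix t L K = submatrix (1\<^sub>m n) L K"
  proof (rule eq_matI)
    fix a b assume "a < dim_row (submatrix (1\<^sub>m n) L K)" "b < dim_col (submatrix (1\<^sub>m n) L K)"
    then have ab: "a < d" "b < d" using L' K' by (simp_all add: submatrix_eq_mat[OF one_carrier_mat L'(1) K'(1)])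
    then have "pick L a \<noteq> r" using pick_in_subset_of_size[OF L] r by metis
    then show "submatrix t L K $$ (a, b) = submatrix (1\<^sub>m n) L K $$ (a, b)"
      using ab pick_in_subset_of_size[OF L] pick_in_subset_of_size[OF K] L' K'
      by (simp add: submatrix_eq_mat[OF tc L'(1) K'(1)] submatrix_eq_mat[OF one_carrier_mat L'(1) K'(1)]
          identity_off_row_entry[OF t])
  qed (simp_all add: submatrix_eq_mat[OF tc L'(1) K'(1)] submatrix_eq_mat[OF one_carrier_mat L'(1) K'(1)])
  then show ?thesis using det_submatrix_one[OF L K] by simp
qed

lemma det_submatrix_identity_off_row_in:
  fixes t :: "'a::field mat"
  assumes t: "identity_off_row n r t" and J: "J \<in> subsets_of_size n d" and r: "r \<in> J"
  shows "det (submatrix t J J) = t $$ (r, r)"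
proof -
  have J': "J \<subseteq> {..<n}" "card J = d" using J by (auto simp: subsets_of_size_iff)
  have tc: "t \<in> carrier_mat n n" using t by (simp add: identity_off_row_def)
  have S: "submatrix t J J = mat d d (\<lambda>(a, b). t $$ (pick J a, pick J b))"
    using submatrix_eq_mat[OF tc J'(1) J'(1)] J' by simp
  let ?r = "pick_index J r"
  have rr: "?r < d" using pick_index_less_card[OF finite_of_subsets_of_size[OF J] r] J' by simp
  have pr: "pick J ?r = r" by (rule pick_pick_index[OF r])
  have row: "t $$ (pick J a, pick J b) = (if a = b then 1 else 0)" if "a < d" "b < d" "a \<noteq> ?r" for a b
  proof -
    have "pick J a \<noteq> r" using that rr pr pick_eq_iff[of a J ?r] J' by auto
    then show ?thesis
      using that pick_in_subset_of_size[OF J] pick_eq_iff[of a J b] J' by (simp add: identity_off_row_entry[OF t])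
  qed
  have "det (submatrix t J J) = of_int (sign (id :: nat \<Rightarrow> nat)) * submatrix t J J $$ (?r, id ?r)"
    by (rule det_perm_but_row[OF _ permutes_id rr]) (simp_all add: S row)
  then show ?thesis using rr by (simp add: S pr sign_id)
qed

lemma det_submatrix_identity_off_row_in_ne:
  fixes t :: "'a::field mat"
  assumes t: "identity_off_row n r t" and J: "J \<in> subsets_of_size n d" and r: "r \<in> J"
    and L: "L \<in> subsets_of_size n d" and LJ: "L \<noteq> J"
  shows "det (submatrix t L J) = 0"
proof -
  have J': "J \<subseteq> {..<n}" "card J = d" and L': "L \<subseteq> {..<n}" "card L = d"
    using J L by (auto simp: subsets_of_size_iff)
  have tc: "t \<in> carrier_mat n n" using t by (simp add: identity_off_row_def)
  obtain l where l: "l \<in> L" "l \<notin> J" using subsets_of_size_ne_obtain[OF L J LJ] .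
  show ?thesis
  proof (rule det_submatrix_zero_row[OF tc L'(1) J'(1) _ l(1)])
    fix k assume k: "k \<in> J"
    have "l < n" "k < n" "l \<noteq> r" "l \<noteq> k" using l k r L' J' by auto
    then show "t $$ (l, k) = 0" by (simp add: identity_off_row_entry[OF t])
  qed (simp add: J' L')
qed

lemma det_submatrix_identity_off_row_exchange:
  fixes t :: "'a::field mat"
  assumes t: "identity_off_row n r t" and X: "X \<in> subsets_of_size n d" and x: "x \<in> X" and rX: "r \<notin> X"
  shows "det (submatrix t (insert r (X - {x})) X) = 0 \<longleftrightarrow> t $$ (r, x) = 0"
proof -
  let ?Y = "insert r (X - {x})"
  have tc: "t \<in> carrier_mat n n" and rn: "r < n" using t by (simp_all add: identity_off_row_def)
  have Y: "?Y \<in> subsets_of_size n d" by (rule insert_Diff_in_subsets_of_size[OF X x rn rX])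
  have X': "X \<subseteq> {..<n}" "card X = d" and Y': "?Y \<subseteq> {..<n}" "card ?Y = d"
    using X Y by (auto simp: subsets_of_size_iff)
  have finX: "finite X" and finY: "finite ?Y" using finite_of_subsets_of_size X Y by blast+
  have S: "submatrix t ?Y X = mat d d (\<lambda>(a, b). t $$ (pick ?Y a, pick X b))"
    using submatrix_eq_mat[OF tc Y'(1) X'(1)] X' Y' by simp
  define h where "h y = (if y = r then x else y)" for y
  have "bij_betw h ?Y X"
    by (rule bij_betwI[where g = "\<lambda>z. if z = x then r else z"]) (use x rX in \<open>auto simp: h_def\<close>)
  then have hY: "bij_betw (h \<circ> pick ?Y) {0..<d} X"
    using bij_betw_trans[OF bij_betw_pick[OF finY]] Y'(2) by simp
  let ?\<sigma> = "\<lambda>a. if a < d then pick_index X (h (pick ?Y a)) else a"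
  from pick_index_comp_permutes[OF finX X'(2) hY] have \<sigma>: "?\<sigma> permutes {0..<d}"
    unfolding comp_def .
  let ?r = "pick_index ?Y r"
  have rr: "?r < d" using pick_index_less_card[OF finY, of r] Y'(2) by simp
  have pr: "pick ?Y ?r = r" by (rule pick_pick_index) simp
  txt \<open>Off the row of r, the minor is the permutation matrix of h, which fixes X - {x} and
    sends r to x.\<close>
  have "det (submatrix t ?Y X) = of_int (sign ?\<sigma>) * submatrix t ?Y X $$ (?r, ?\<sigma> ?r)"
  proof (rule det_perm_but_row[OF _ \<sigma> rr])
    show "submatrix t ?Y X \<in> carrier_mat d d" by (simp add: S)
    fix a assume a: "a < d" "a \<noteq> ?r"
    have ya: "pick ?Y a \<noteq> r" using a rr pr pick_eq_iff[of a ?Y ?r] Y'(2) by auto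
    then have yX: "pick ?Y a \<in> X" using pick_in_subset_of_size[OF Y a(1)] by auto
    then have \<sigma>a: "?\<sigma> a = pick_index X (pick ?Y a)" "pick X (?\<sigma> a) = pick ?Y a"
      using a ya by (simp_all add: h_def pick_pick_index)
    have yn: "pick ?Y a < n" using pick_in_subset_of_size[OF Y a(1)] by simp
    show "submatrix t ?Y X $$ (a, b) = 0" if "b < d" "b \<noteq> ?\<sigma> a" for b
    proof -
      have "pick X b \<noteq> pick ?Y a" using that \<sigma>a(1) pick_index_pick[of b X] X'(2) by auto
      then show ?thesis
        using that a ya yn pick_in_subset_of_size[OF X that(1)] by (simp add: S identity_off_row_entry[OF t])
    qed
    have "?\<sigma> a < d" using pick_index_less_card[OF finX yX] \<sigma>a(1) X'(2) by simp
    then show "submatrix t ?Y X $$ (a, ?\<sigma> a) = 1"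
      using a ya yn \<sigma>a(2) by (simp add: S identity_off_row_entry[OF t])
  qed
  also have "submatrix t ?Y X $$ (?r, ?\<sigma> ?r) = t $$ (r, x)"
    using rr pr pick_index_less_card[OF finX x] X'(2) by (simp add: S h_def pick_pick_index[OF x])
  finally show ?thesis by (simp add: sign_def)
qed

section \<open>The diagonal action on the exterior power\<close>

definition ext_unit :: "nat set \<Rightarrow> nat set \<Rightarrow> 'a::zero_neq_one" where
  "ext_unit J = (\<lambda>K. if K = J then 1 else 0)"

lemma ext_unit_in_ext_pow: "J \<in> subsets_of_size n d \<Longrightarrow> ext_unit J \<in> ext_pow n d"
  unfolding ext_pow_def ext_unit_def subsets_of_size_def by auto

lemma ext_pow_outside: "f \<in> ext_pow n d \<Longrightarrow> L \<notin> subsets_of_size n d \<Longrightarrow> f L = 0"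
  unfolding ext_pow_def subsets_of_size_def by auto

lemma ext_pow_smult: "f \<in> ext_pow n d \<Longrightarrow> (\<lambda>K. c * f K) \<in> ext_pow n d"
  unfolding ext_pow_def by auto

lemma ext_pow_sum:
  assumes "\<And>x. x \<in> S \<Longrightarrow> F x \<in> ext_pow n d"
  shows "(\<lambda>K. \<Sum>x\<in>S. c x * F x K) \<in> ext_pow n d"
  unfolding ext_pow_def
proof (intro CollectI allI impI)
  fix K assume nz: "(\<Sum>x\<in>S. c x * F x K) \<noteq> 0"
  have "\<exists>x\<in>S. c x * F x K \<noteq> 0"
  proof (rule ccontr)
    assume "\<not> ?thesis"
    then have "(\<Sum>x\<in>S. c x * F x K) = 0" by (intro sum.neutral) simp
    with nz show False by contradiction
  qed
  then obtain x where "x \<in> S" "F x K \<noteq> 0" by auto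
  then show "K \<subseteq> {..<n} \<and> card K = d" using assms[of x] unfolding ext_pow_def by auto
qed

lemma ext_pow_eq_sum_ext_unit:
  assumes f: "f \<in> ext_pow n d"
  shows "f = (\<lambda>K. \<Sum>L\<in>subsets_of_size n d. f L * ext_unit L K)"
proof
  fix K
  show "f K = (\<Sum>L\<in>subsets_of_size n d. f L * ext_unit L K)"
  proof -
    have "(\<Sum>L\<in>subsets_of_size n d. f L * ext_unit L K) = (\<Sum>L\<in>subsets_of_size n d. if K = L then f L else 0)"
      by (intro sum.cong) (auto simp: ext_unit_def)
    then show ?thesis using ext_pow_outside[OF f, of K] by auto
  qed
qed

lemma ext_act_eq_sum:
  "ext_act n d g f = (\<lambda>L. \<Sum>K\<in>subsets_of_size n d. f K * wedge n (map (col g) (sorted_list_of_set K)) L)"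
  unfolding ext_act_def subsets_of_size_def ..

lemma wedge_cols_eq_det_submatrix:
  assumes G: "G \<in> carrier_mat n m" and K: "K \<subseteq> {..<m}" and L: "L \<subseteq> {..<n}" "card L = card K"
  shows "wedge n (map (col G) (sorted_list_of_set K)) L = det (submatrix G L K)"
proof -
  have fin: "finite K" using K finite_subset by blast
  have "mat_of_cols n (map (col G) (sorted_list_of_set K)) = submatrix G UNIV K"
  proof (rule eq_matI)
    fix i j assume "i < dim_row (submatrix G UNIV K)" "j < dim_col (submatrix G UNIV K)"
    then have ij: "i < n" "j < card K" using submatrix_cols_eq_mat[OF G K] by auto
    then have "pick K j < m" using K pick_in_set_less by blast
    then show "mat_of_cols n (map (col G) (sorted_list_of_set K)) $$ (i, j) = submatrix G UNIV K $$ (i, j)"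
      using G ij by (simp add: submatrix_cols_eq_mat[OF G K] sorted_list_of_set_eq_map_pick[OF fin]
          mat_of_cols_index)
  qed (simp_all add: submatrix_cols_eq_mat[OF G K] fin)
  then show ?thesis
    using L by (simp add: wedge_def submatrix_split[symmetric] sorted_list_of_set_eq_map_pick[OF fin])
qed

lemma ext_act_eq_sum_det:
  assumes G: "G \<in> carrier_mat n n" and L: "L \<in> subsets_of_size n d"
  shows "ext_act n d G f L = (\<Sum>K\<in>subsets_of_size n d. f K * det (submatrix G L K))"
  using L by (auto simp: ext_act_eq_sum subsets_of_size_iff wedge_cols_eq_det_submatrix[OF G] intro!: sum.cong)

lemma ext_act_outside:
  assumes "L \<notin> subsets_of_size n d" shows "ext_act n d G f L = 0"
  unfolding ext_act_eq_sum
proof (rule sum.neutral, rule ballI)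
  fix K assume "K \<in> subsets_of_size n d"
  then have "\<not> (L \<subseteq> {..<n} \<and> card L = length (map (col G) (sorted_list_of_set K)))"
    using assms by (simp add: subsets_of_size_iff)
  then have "wedge n (map (col G) (sorted_list_of_set K)) L = 0" unfolding wedge_def by (rule if_not_P)
  then show "f K * wedge n (map (col G) (sorted_list_of_set K)) L = 0" by simp
qed

lemma ext_act_in_ext_pow: "ext_act n d G f \<in> ext_pow n d"
  using ext_act_outside unfolding ext_pow_def subsets_of_size_iff by blast

lemma ext_act_add: "ext_act n d G (\<lambda>K. f K + h K) = (\<lambda>L. ext_act n d G f L + ext_act n d G h L)"
  unfolding ext_act_eq_sum by (simp add: sum.distrib distrib_right)

lemma ext_act_smult: "ext_act n d G (\<lambda>K. c * f K) = (\<lambda>L. c * ext_act n d G f L)"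
  unfolding ext_act_eq_sum by (simp add: sum_distrib_left mult.assoc)

lemma ext_act_ext_unit:
  "K \<in> subsets_of_size n d \<Longrightarrow> ext_act n d G (ext_unit K) = wedge n (map (col G) (sorted_list_of_set K))"
proof
  fix L
  assume "K \<in> subsets_of_size n d"
  have "(\<Sum>K'\<in>subsets_of_size n d. ext_unit K K' * wedge n (map (col G) (sorted_list_of_set K')) L)
      = (\<Sum>K'\<in>subsets_of_size n d. if K = K' then wedge n (map (col G) (sorted_list_of_set K')) L else 0)"
    by (intro sum.cong) (auto simp: ext_unit_def)
  then show "ext_act n d G (ext_unit K) L = wedge n (map (col G) (sorted_list_of_set K)) L"
    using \<open>K \<in> subsets_of_size n d\<close> by (simp add: ext_act_eq_sum)
qed

lemma ext_act_ext_unit_det: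
  assumes G: "G \<in> carrier_mat n n" and K: "K \<in> subsets_of_size n d" and L: "L \<in> subsets_of_size n d"
  shows "ext_act n d G (ext_unit K) L = det (submatrix G L K)"
  using K L by (simp add: ext_act_ext_unit wedge_cols_eq_det_submatrix[OF G] subsets_of_size_iff)

lemma wedge_eq_ext_act_ext_unit:
  assumes cols: "\<And>j. j < n \<Longrightarrow> col A j = \<alpha> j" and J: "J \<in> subsets_of_size n d"
  shows "wedge n (map \<alpha> (sorted_list_of_set J)) = ext_act n d A (ext_unit J)"
proof -
  have "map \<alpha> (sorted_list_of_set J) = map (col A) (sorted_list_of_set J)"
    using J finite_of_subsets_of_size[OF J] by (auto simp: cols subsets_of_size_iff)
  then show ?thesis unfolding ext_act_ext_unit[OF J] by (rule arg_cong)
qed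

lemma ext_act_mult:
  fixes G H :: "'a::field mat"
  assumes G: "G \<in> carrier_mat n n" and H: "H \<in> carrier_mat n n"
  shows "ext_act n d G (ext_act n d H f) = ext_act n d (G * H) f"
proof
  fix L
  show "ext_act n d G (ext_act n d H f) L = ext_act n d (G * H) f L"
  proof (cases "L \<in> subsets_of_size n d")
    case L: True
    have "ext_act n d G (ext_act n d H f) L
        = (\<Sum>K\<in>subsets_of_size n d. \<Sum>M\<in>subsets_of_size n d.
            f M * (det (submatrix G L K) * det (submatrix H K M)))"
      by (simp add: ext_act_eq_sum_det[OF G L] ext_act_eq_sum_det[OF H] sum_distrib_left sum_distrib_right ac_simps)
    also have "\<dots> = (\<Sum>M\<in>subsets_of_size n d. f M * det (submatrix (G * H) L M))"
      by (subst sum.swap) (simp add: det_submatrix_mult[OF G H L] sum_distrib_left)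
    also have "\<dots> = ext_act n d (G * H) f L"
      using G H by (simp add: ext_act_eq_sum_det[OF _ L])
    finally show ?thesis .
  qed (simp add: ext_act_outside)
qed

lemma ext_act_one:
  assumes f: "f \<in> ext_pow n d"
  shows "ext_act n d (1\<^sub>m n :: 'a::field mat) f = f"
proof
  fix L
  show "ext_act n d (1\<^sub>m n) f L = f L"
  proof (cases "L \<in> subsets_of_size n d")
    case L: True
    have "ext_act n d (1\<^sub>m n) f L = (\<Sum>K\<in>subsets_of_size n d. if L = K then f K else 0)"
      by (simp add: ext_act_eq_sum_det[OF _ L] det_submatrix_one[OF L] if_distrib[of "\<lambda>x. _ * x"] cong: if_cong)
    then show ?thesis using L by simp
  qed (simp add: ext_act_outside ext_pow_outside[OF f])
qed

lemma ext_act_identity_off_row_notin: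
  fixes t :: "'a::field mat"
  assumes t: "identity_off_row n r t" and f: "f \<in> ext_pow n d"
    and L: "L \<in> subsets_of_size n d" and r: "r \<notin> L"
  shows "ext_act n d t f L = f L"
proof -
  have tc: "t \<in> carrier_mat n n" using t by (simp add: identity_off_row_def)
  have "ext_act n d t f L = (\<Sum>K\<in>subsets_of_size n d. if L = K then f K else 0)"
    by (simp add: ext_act_eq_sum_det[OF tc L] det_submatrix_identity_off_row_notin[OF t L _ r]
        if_distrib[of "\<lambda>x. _ * x"] cong: if_cong)
  then show ?thesis using L by simp
qed

lemma ext_act_identity_off_row_ext_unit:
  fixes t :: "'a::field mat"
  assumes t: "identity_off_row n r t" and J: "J \<in> subsets_of_size n d" and r: "r \<in> J"
  shows "ext_act n d t (ext_unit J) = (\<lambda>K. t $$ (r, r) * ext_unit J K)"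
proof
  fix L
  have tc: "t \<in> carrier_mat n n" using t by (simp add: identity_off_row_def)
  show "ext_act n d t (ext_unit J) L = t $$ (r, r) * ext_unit J L"
  proof (cases "L \<in> subsets_of_size n d")
    case True
    then have "ext_act n d t (ext_unit J) L = det (submatrix t L J)" by (rule ext_act_ext_unit_det[OF tc J])
    then show ?thesis
      using det_submatrix_identity_off_row_in[OF t J r] det_submatrix_identity_off_row_in_ne[OF t J r True]
      by (simp add: ext_unit_def)
  next
    case False
    then have "L \<noteq> J" using J by auto
    with False show ?thesis by (simp add: ext_act_outside ext_unit_def)
  qed
qed

section \<open>Linear maps of the exterior power\<close>

definition ext_linear :: "nat \<Rightarrow> nat \<Rightarrow> ((nat set \<Rightarrow> 'a::field) \<Rightarrow> (nat set \<Rightarrow> 'a)) \<Rightarrow> bool" where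
  "ext_linear n d \<Phi> \<longleftrightarrow> (\<forall>f\<in>ext_pow n d. \<Phi> f \<in> ext_pow n d)
     \<and> (\<forall>f\<in>ext_pow n d. \<forall>g\<in>ext_pow n d. \<Phi> (\<lambda>K. f K + g K) = (\<lambda>K. \<Phi> f K + \<Phi> g K))
     \<and> (\<forall>c. \<forall>f\<in>ext_pow n d. \<Phi> (\<lambda>K. c * f K) = (\<lambda>K. c * \<Phi> f K))"

lemma ext_linear_in_ext_pow: "ext_linear n d \<Phi> \<Longrightarrow> f \<in> ext_pow n d \<Longrightarrow> \<Phi> f \<in> ext_pow n d"
  unfolding ext_linear_def by blast

lemma ext_linear_add:
  "ext_linear n d \<Phi> \<Longrightarrow> f \<in> ext_pow n d \<Longrightarrow> g \<in> ext_pow n d \<Longrightarrow> \<Phi> (\<lambda>K. f K + g K) = (\<lambda>K. \<Phi> f K + \<Phi> g K)"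
  unfolding ext_linear_def by blast

lemma ext_linear_smult: "ext_linear n d \<Phi> \<Longrightarrow> f \<in> ext_pow n d \<Longrightarrow> \<Phi> (\<lambda>K. c * f K) = (\<lambda>K. c * \<Phi> f K)"
  unfolding ext_linear_def by blast

lemma ext_endo_imp_ext_linear: "ext_endo n d k s \<phi> \<Longrightarrow> ext_linear n d \<phi>"
  unfolding ext_linear_def ext_endo_def by blast

lemma ext_linear_ext_act: "ext_linear n d (ext_act n d G)"
  unfolding ext_linear_def by (simp add: ext_act_in_ext_pow ext_act_add ext_act_smult)

lemma ext_linear_comp:
  assumes "ext_linear n d \<Phi>" "ext_linear n d \<Psi>"
  shows "ext_linear n d (\<lambda>f. \<Phi> (\<Psi> f))"
  using assms unfolding ext_linear_def by simp

lemma ext_linear_sum: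
  assumes \<Phi>: "ext_linear n d \<Phi>" and S: "finite S" and F: "\<And>x. x \<in> S \<Longrightarrow> F x \<in> ext_pow n d"
  shows "\<Phi> (\<lambda>K. \<Sum>x\<in>S. c x * F x K) = (\<lambda>K. \<Sum>x\<in>S. c x * \<Phi> (F x) K)"
  using S F
proof (induction S rule: finite_induct)
  case empty
  have "(\<lambda>K. 0) \<in> ext_pow n d" by (simp add: ext_pow_def)
  from ext_linear_smult[OF \<Phi> this, of 0] show ?case by simp
next
  case (insert x S)
  have "\<Phi> (\<lambda>K. \<Sum>y\<in>insert x S. c y * F y K) = \<Phi> (\<lambda>K. c x * F x K + (\<Sum>y\<in>S. c y * F y K))"
    using insert.hyps by simp
  also have "\<dots> = (\<lambda>K. \<Phi> (\<lambda>K. c x * F x K) K + \<Phi> (\<lambda>K. \<Sum>y\<in>S. c y * F y K) K)"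
    using insert.prems by (intro ext_linear_add[OF \<Phi>] ext_pow_smult ext_pow_sum) auto
  also have "\<dots> = (\<lambda>K. c x * \<Phi> (F x) K + (\<Sum>y\<in>S. c y * \<Phi> (F y) K))"
    using insert.prems by (simp add: ext_linear_smult[OF \<Phi>] insert.IH)
  also have "\<dots> = (\<lambda>K. \<Sum>y\<in>insert x S. c y * \<Phi> (F y) K)"
    using insert.hyps by simp
  finally show ?case .
qed

lemma ext_linear_diagonal:
  assumes \<Phi>: "ext_linear n d \<Phi>"
    and diag: "\<And>L. L \<in> subsets_of_size n d \<Longrightarrow> \<Phi> (ext_unit L) = (\<lambda>K. \<gamma> L * ext_unit L K)"
    and f: "f \<in> ext_pow n d"
  shows "\<Phi> f = (\<lambda>K. \<gamma> K * f K)"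
proof -
  have "\<Phi> f = \<Phi> (\<lambda>K. \<Sum>L\<in>subsets_of_size n d. f L * ext_unit L K)"
    using ext_pow_eq_sum_ext_unit[OF f] by (rule arg_cong)
  also have "\<dots> = (\<lambda>K. \<Sum>L\<in>subsets_of_size n d. f L * \<Phi> (ext_unit L) K)"
    by (rule ext_linear_sum[OF \<Phi>]) (simp_all add: ext_unit_in_ext_pow)
  also have "\<dots> = (\<lambda>K. \<Sum>L\<in>subsets_of_size n d. f L * (\<gamma> L * ext_unit L K))"
    by (intro ext sum.cong refl) (simp add: diag)
  also have "\<dots> = (\<lambda>K. \<Sum>L\<in>subsets_of_size n d. if K = L then \<gamma> K * f K else 0)"
    by (intro ext sum.cong refl) (simp add: ext_unit_def)
  also have "\<dots> = (\<lambda>K. \<gamma> K * f K)"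
    using ext_pow_outside[OF f] by auto
  finally show ?thesis .
qed

lemma commuting_identity_off_row_diagonal:
  fixes \<Psi> :: "(nat set \<Rightarrow> 'a::field) \<Rightarrow> nat set \<Rightarrow> 'a"
  assumes \<Psi>: "ext_linear n d \<Psi>"
    and t: "\<And>i. i < n \<Longrightarrow> identity_off_row n i (t i)" and t_ii: "\<And>i. i < n \<Longrightarrow> t i $$ (i, i) \<noteq> 1"
    and comm: "\<And>i f. i < n \<Longrightarrow> f \<in> ext_pow n d \<Longrightarrow> \<Psi> (ext_act n d (t i) f) = ext_act n d (t i) (\<Psi> f)"
    and J: "J \<in> subsets_of_size n d"
  shows "\<Psi> (ext_unit J) = (\<lambda>K. \<Psi> (ext_unit J) J * ext_unit J K)"
proof -
  let ?g = "\<Psi> (ext_unit J)"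
  have eJ: "ext_unit J \<in> ext_pow n d" by (rule ext_unit_in_ext_pow[OF J])
  have g: "?g \<in> ext_pow n d" by (rule ext_linear_in_ext_pow[OF \<Psi> eJ])
  have "?g L = 0" if LJ: "L \<noteq> J" for L
  proof (rule ccontr)
    assume ne: "?g L \<noteq> 0"
    then have L: "L \<in> subsets_of_size n d" using ext_pow_outside[OF g] by blast
    obtain i where i: "i \<in> J" "i \<notin> L" using subsets_of_size_ne_obtain[OF J L] LJ by metis
    then have "i < n" using J by (auto simp: subsets_of_size_iff)
    have "ext_act n d (t i) ?g = \<Psi> (\<lambda>K. t i $$ (i, i) * ext_unit J K)"
      using comm[OF \<open>i < n\<close> eJ] ext_act_identity_off_row_ext_unit[OF t[OF \<open>i < n\<close>] J i(1)] by simp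
    also have "\<dots> = (\<lambda>K. t i $$ (i, i) * ?g K)" by (rule ext_linear_smult[OF \<Psi> eJ])
    finally have "t i $$ (i, i) * ?g L = ?g L"
      using ext_act_identity_off_row_notin[OF t[OF \<open>i < n\<close>] g L i(2)] by metis
    then have "(t i $$ (i, i) - 1) * ?g L = 0" by (simp add: algebra_simps)
    with ne t_ii[OF \<open>i < n\<close>] show False by simp
  qed
  then show ?thesis by (auto simp: ext_unit_def)
qed

lemma commuting_identity_off_row_exchange:
  fixes \<Psi> :: "(nat set \<Rightarrow> 'a::field) \<Rightarrow> nat set \<Rightarrow> 'a"
  assumes \<Psi>: "ext_linear n d \<Psi>"
    and diag: "\<And>L. L \<in> subsets_of_size n d \<Longrightarrow> \<Psi> (ext_unit L) = (\<lambda>K. \<gamma> L * ext_unit L K)"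
    and t: "identity_off_row n r t"
    and comm: "\<And>f. f \<in> ext_pow n d \<Longrightarrow> \<Psi> (ext_act n d t f) = ext_act n d t (\<Psi> f)"
    and X: "X \<in> subsets_of_size n d" and x: "x \<in> X" and r: "r \<notin> X" and t_rx: "t $$ (r, x) \<noteq> 0"
  shows "\<gamma> X = \<gamma> (insert r (X - {x}))"
proof -
  let ?Y = "insert r (X - {x})" and ?h = "ext_act n d t (ext_unit X)"
  have tc: "t \<in> carrier_mat n n" and "r < n" using t by (simp_all add: identity_off_row_def)
  have Y: "?Y \<in> subsets_of_size n d" by (rule insert_Diff_in_subsets_of_size[OF X x \<open>r < n\<close> r])
  have hY: "?h ?Y \<noteq> 0"
    using det_submatrix_identity_off_row_exchange[OF t X x r] t_rx by (simp add: ext_act_ext_unit_det[OF tc X Y])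
  have "\<Psi> ?h = ext_act n d t (\<lambda>K. \<gamma> X * ext_unit X K)"
    using comm[OF ext_unit_in_ext_pow[OF X]] diag[OF X] by simp
  also have "\<dots> = (\<lambda>K. \<gamma> X * ?h K)" by (rule ext_act_smult)
  finally have "\<Psi> ?h ?Y = \<gamma> X * ?h ?Y" by simp
  moreover have "\<Psi> ?h ?Y = \<gamma> ?Y * ?h ?Y"
    using ext_linear_diagonal[OF \<Psi> diag ext_act_in_ext_pow] by simp
  ultimately show ?thesis using hY by simp
qed

lemma ext_endo_commute:
  "ext_endo n d k s \<phi> \<Longrightarrow> i < k \<Longrightarrow> f \<in> ext_pow n d \<Longrightarrow> \<phi> (ext_act n d (s i) f) = ext_act n d (s i) (\<phi> f)"
  unfolding ext_endo_def by blast

lemma ext_endo_conj_commute: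
  fixes A B :: "'a::field mat"
  assumes endo: "ext_endo n d k s \<phi>" and i: "i < k" and si: "s i \<in> carrier_mat n n"
    and A: "A \<in> carrier_mat n n" and B: "B \<in> carrier_mat n n" and AB: "A * B = 1\<^sub>m n"
    and f: "f \<in> ext_pow n d"
  shows "ext_act n d B (\<phi> (ext_act n d A (ext_act n d (B * s i * A) f)))
       = ext_act n d (B * s i * A) (ext_act n d B (\<phi> (ext_act n d A f)))"
proof -
  have BsA: "B * s i * A \<in> carrier_mat n n" using A B si by simp
  have "A * (B * s i * A) = (A * B) * s i * A" using A B si by (simp add: assoc_mult_mat[of _ n n _ n _ n])
  then have left: "A * (B * s i * A) = s i * A" using AB si by simp
  have "(B * s i * A) * B = B * s i * (A * B)" using A B si by (simp add: assoc_mult_mat[of _ n n _ n _ n])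
  then have right: "(B * s i * A) * B = B * s i" using AB B si by simp
  have "ext_act n d A (ext_act n d (B * s i * A) f) = ext_act n d (s i) (ext_act n d A f)"
    by (simp add: ext_act_mult[OF A BsA] ext_act_mult[OF si A] left)
  then have "\<phi> (ext_act n d A (ext_act n d (B * s i * A) f)) = ext_act n d (s i) (\<phi> (ext_act n d A f))"
    using ext_endo_commute[OF endo i ext_act_in_ext_pow] by simp
  then show ?thesis
    by (simp add: ext_act_mult[OF B si] ext_act_mult[OF BsA B] right)
qed

lemma ext_linear_conj_eigen:
  fixes A B :: "'a::field mat"
  assumes \<phi>: "ext_linear n d \<phi>" and A: "A \<in> carrier_mat n n" and B: "B \<in> carrier_mat n n"
    and AB: "A * B = 1\<^sub>m n" and eig: "ext_act n d B (\<phi> (ext_act n d A f)) = (\<lambda>K. c * f K)"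
  shows "\<phi> (ext_act n d A f) = (\<lambda>K. c * ext_act n d A f K)"
proof -
  have "\<phi> (ext_act n d A f) = ext_act n d (A * B) (\<phi> (ext_act n d A f))"
    using ext_act_one[OF ext_linear_in_ext_pow[OF \<phi> ext_act_in_ext_pow]] AB by simp
  also have "\<dots> = ext_act n d A (\<lambda>K. c * f K)" by (simp add: ext_act_mult[OF A B, symmetric] eig)
  finally show ?thesis by (simp add: ext_act_smult)
qed

lemma ext_endo_eigenvalues_in_basis:
  fixes A B :: "'a::field mat"
  assumes endo: "ext_endo n d k s \<phi>" and nk: "n \<le> k"
    and refl: "\<And>i. i < n \<Longrightarrow> is_reflection n (s i)"
    and rvec: "\<And>i. i < n \<Longrightarrow> is_reflection_vector n (s i) (\<alpha> i)"
    and A: "A \<in> carrier_mat n n" and B: "B \<in> carrier_mat n n" and AB: "A * B = 1\<^sub>m n" and BA: "B * A = 1\<^sub>m n"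
    and cols: "\<And>j. j < n \<Longrightarrow> col A j = \<alpha> j"
  shows "\<exists>\<gamma>. (\<forall>J\<in>subsets_of_size n d. \<phi> (wedge n (map \<alpha> (sorted_list_of_set J)))
        = (\<lambda>K. \<gamma> J * wedge n (map \<alpha> (sorted_list_of_set J)) K))
      \<and> (\<forall>X\<in>subsets_of_size n d. \<forall>p\<in>X. \<forall>q. q \<notin> X \<longrightarrow> arrow s \<alpha> {..<n} p q
          \<longrightarrow> \<gamma> X = \<gamma> (insert q (X - {p})))"
proof -
  define \<Psi> where "\<Psi> f = ext_act n d B (\<phi> (ext_act n d A f))" for f
  define \<gamma> where "\<gamma> J = \<Psi> (ext_unit J) J" for J
  have t: "identity_off_row n i (B * s i * A)" "(B * s i * A) $$ (i, i) \<noteq> 1"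
    "\<And>j. j < n \<Longrightarrow> j \<noteq> i \<Longrightarrow> (B * s i * A) $$ (i, j) = 0 \<longleftrightarrow> s i *\<^sub>v \<alpha> j = \<alpha> j"
    if "i < n" for i
    using reflection_in_basis[OF refl[OF that] rvec[OF that, folded cols[OF that]] that A B BA] cols by auto
  have \<phi>: "ext_linear n d \<phi>" by (rule ext_endo_imp_ext_linear[OF endo])
  have \<Psi>: "ext_linear n d \<Psi>"
    unfolding \<Psi>_def by (intro ext_linear_comp[OF ext_linear_ext_act] ext_linear_comp[OF \<phi>] ext_linear_ext_act)
  have comm: "\<Psi> (ext_act n d (B * s i * A) f) = ext_act n d (B * s i * A) (\<Psi> f)"
    if "i < n" "f \<in> ext_pow n d" for i f
    using ext_endo_conj_commute[OF endo _ _ A B AB] refl[OF that(1)] that nk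
    by (simp add: \<Psi>_def is_reflection_def)
  have diag: "\<Psi> (ext_unit J) = (\<lambda>K. \<gamma> J * ext_unit J K)" if "J \<in> subsets_of_size n d" for J
    using commuting_identity_off_row_diagonal[OF \<Psi> t(1) t(2) comm that] by (simp add: \<gamma>_def)
  show ?thesis
  proof (intro exI[of _ \<gamma>] conjI ballI allI impI)
    fix J assume J: "J \<in> subsets_of_size n d"
    then show "\<phi> (wedge n (map \<alpha> (sorted_list_of_set J))) = (\<lambda>K. \<gamma> J * wedge n (map \<alpha> (sorted_list_of_set J)) K)"
      using ext_linear_conj_eigen[OF \<phi> A B AB] diag by (simp add: \<Psi>_def wedge_eq_ext_act_ext_unit[OF cols J])
  next
    fix X p q assume X: "X \<in> subsets_of_size n d" and pq: "p \<in> X" "q \<notin> X" and "arrow s \<alpha> {..<n} p q"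
    then have "q < n" "p < n" "p \<noteq> q" "s q *\<^sub>v \<alpha> p \<noteq> \<alpha> p" by (auto simp: arrow_def)
    then have "(B * s q * A) $$ (q, p) \<noteq> 0" using t(3) by simp
    then show "\<gamma> X = \<gamma> (insert q (X - {p}))"
      using commuting_identity_off_row_exchange[OF \<Psi> diag t(1)[OF \<open>q < n\<close>] comm[OF \<open>q < n\<close>] X pq] by simp
  qed
qed

lemma is_move_invariant:
  assumes exchange: "\<And>X p q. X \<in> S \<Longrightarrow> p \<in> X \<Longrightarrow> q \<notin> X \<Longrightarrow> arrow s \<alpha> I p q \<Longrightarrow> \<gamma> X = \<gamma> (insert q (X - {p}))"
    and J: "J \<in> S" and J': "J' \<in> S" and move: "is_move s \<alpha> I J J'"
  shows "\<gamma> J = \<gamma> J'"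
proof -
  obtain p q where pq: "p \<in> J" "q \<in> J'" "J - {p} = J' - {q}" and ar: "arrow s \<alpha> I p q \<or> arrow s \<alpha> I q p"
    using move unfolding is_move_def by blast
  then have "p \<noteq> q" unfolding arrow_def by auto
  then have out: "q \<notin> J" "p \<notin> J'" using pq by (auto simp: set_eq_iff)
  have J'_eq: "J' = insert q (J - {p})" and J_eq: "J = insert p (J' - {q})" using pq by auto
  from ar show ?thesis
  proof
    assume "arrow s \<alpha> I p q"
    with exchange[OF J pq(1) out(1)] show ?thesis by (simp add: J'_eq)
  next
    assume "arrow s \<alpha> I q p"
    with exchange[OF J' pq(2) out(2)] show ?thesis by (simp add: J_eq)
  qed
qed

theorem lemma4p3:
  fixes n k d :: nat
    and s :: "nat \<Rightarrow> 'a::field_char_0 mat"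
    and \<alpha> :: "nat \<Rightarrow> 'a vec"
    and \<phi> :: "(nat set \<Rightarrow> 'a) \<Rightarrow> (nat set \<Rightarrow> 'a)"
  assumes refl: "\<forall>i<k. is_reflection n (s i) \<and> invertible_mat (s i)"
    and rvec: "\<forall>i<k. is_reflection_vector n (s i) (\<alpha> i)"
    and irr: "irreducible_rep n k s"
    and nk: "n \<le> k"
    and conn: "weakly_connected s \<alpha> {..<n}"
    and basis: "vec_basis n (\<alpha> ` {..<n})"
    and dn: "d \<le> n"
    and endo: "ext_endo n d k s \<phi>"
  shows "\<exists>\<gamma> :: nat set \<Rightarrow> 'a.
     (\<forall>J. J \<subseteq> {..<n} \<and> card J = d \<longrightarrow>
        \<phi> (wedge n (map \<alpha> (sorted_list_of_set J)))
          = (\<lambda>K. \<gamma> J * wedge n (map \<alpha> (sorted_list_of_set J)) K))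
   \<and> (\<forall>J J'. J \<subseteq> {..<n} \<and> card J = d \<and> J' \<subseteq> {..<n} \<and> card J' = d
        \<and> is_move s \<alpha> {..<n} J J' \<longrightarrow> \<gamma> J = \<gamma> J')"
proof -
  have refl_n: "is_reflection n (s i)" "is_reflection_vector n (s i) (\<alpha> i)" if "i < n" for i
    using refl rvec nk that by auto
  then have \<alpha>: "\<alpha> i \<in> carrier_vec n" if "i < n" for i
    using that by (simp add: is_reflection_vector_def)
  define A where "A = mat_of_cols n (map \<alpha> [0..<n])"
  have A: "A \<in> carrier_mat n n" and cols: "\<And>j. j < n \<Longrightarrow> col A j = \<alpha> j"
    using \<alpha> by (auto simp: A_def col_mat_of_cols)
  obtain B where B: "B \<in> carrier_mat n n" and AB: "A * B = 1\<^sub>m n" and BA: "B * A = 1\<^sub>m n"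
    using vec_basis_mat_of_cols_invertible[OF basis \<alpha>] unfolding A_def by blast
  obtain \<gamma> where eigen: "\<forall>J\<in>subsets_of_size n d. \<phi> (wedge n (map \<alpha> (sorted_list_of_set J)))
        = (\<lambda>K. \<gamma> J * wedge n (map \<alpha> (sorted_list_of_set J)) K)"
    and exchange: "\<forall>X\<in>subsets_of_size n d. \<forall>p\<in>X. \<forall>q. q \<notin> X \<longrightarrow> arrow s \<alpha> {..<n} p q
        \<longrightarrow> \<gamma> X = \<gamma> (insert q (X - {p}))"
    using ext_endo_eigenvalues_in_basis[OF endo nk refl_n A B AB BA cols] by blast
  show ?thesis
  proof (intro exI[of _ \<gamma>] conjI allI impI)
    fix J assume "J \<subseteq> {..<n} \<and> card J = d"
    then show "\<phi> (wedge n (map \<alpha> (sorted_list_of_set J))) = (\<lambda>K. \<gamma> J * wedge n (map \<alpha> (sorted_list_of_set J)) K)"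
      using eigen by (simp add: subsets_of_size_iff)
  next
    fix J J' assume "J \<subseteq> {..<n} \<and> card J = d \<and> J' \<subseteq> {..<n} \<and> card J' = d \<and> is_move s \<alpha> {..<n} J J'"
    then show "\<gamma> J = \<gamma> J'"
      using is_move_invariant[of "subsets_of_size n d" s \<alpha> "{..<n}" \<gamma>] exchange by (simp add: subsets_of_size_iff)
  qed
qed

end
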